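(* Every rule in the SEJR subfamily, for every choice of the completion subprocedure Alg3 and every tie-breaking, outputs a committee that provides EJR for $(\mathcal{A},k)$.
   Context: Setting: voters $N=\{1,\dots,n\}$, candidates $C=\{c_1,\dots,c_m\}$, approval ballots $A_i\subseteq C$, $\mathcal{A}=(A_1,\dots,A_n)$, $k\le m$ a positive integer. EJR: for $\ell\in\{1,\dots,k\}$, $N^*\subseteq N$ is $\ell$-cohesive if $|N^*|\ge\ell n/k$ and $|\bigcap_{i\in N^*}A_i|\ge\ell$. A committee $W$, $|W|=k$, provides EJR if for every $\ell$ and every $\ell$-cohesive $N^*$ some $i\in N^*$ has $|A_i\cap W|\ge\ell$. Dissatisfaction level: for $W\subseteq C$ with $|W|\le k$ and $c\in C\setminus W$, $\ell(c,W)$ is the largest nonnegative integer $\ell$ with $\ell=\lfloor \frac{k}{n}|\{i\in N: c\in A_i,\ |A_i\cap W|<\ell\}|\rfloor$. SEJR subfamily (parametrized by a subprocedure Alg3): start with $W=\emptyset$. While $|W|<k$ and $\max_{c\in C\setminus W}\ell(c,W)>0$, add to $W$ a candidate $c\in C\setminus W$ maximizing $\ell(c,W)$ (ties broken arbitrarily). Afterwards, if $|W|<k$, Alg3 adds arbitrary candidates from $C\setminus W$ until $|W|=k$. Output $W$. *)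

theory Defs
  imports Complex_Main
begin

definition cohesive :: "'v set \<Rightarrow> ('v \<Rightarrow> 'c set) \<Rightarrow> nat \<Rightarrow> nat \<Rightarrow> 'v set \<Rightarrow> bool" where
  "cohesive N A k l G \<longleftrightarrow> G \<subseteq> N \<and>
     real (card G) \<ge> real l * real (card N) / real k \<and>
     card (\<Inter>i\<in>G. A i) \<ge> l"

definition provides_EJR :: "'v set \<Rightarrow> ('v \<Rightarrow> 'c set) \<Rightarrow> nat \<Rightarrow> 'c set \<Rightarrow> bool" where
  "provides_EJR N A k W \<longleftrightarrow> card W = k \<and>
     (\<forall>l\<in>{1..k}. \<forall>G. cohesive N A k l G \<longrightarrow> (\<exists>i\<in>G. card (A i \<inter> W) \<ge> l))"

definition dis_level :: "'v set \<Rightarrow> ('v \<Rightarrow> 'c set) \<Rightarrow> nat \<Rightarrow> 'c set \<Rightarrow> 'c \<Rightarrow> nat" where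
  "dis_level N A k W c = (GREATEST l. int l =
      \<lfloor>real k / real (card N) * real (card {i\<in>N. c \<in> A i \<and> card (A i \<inter> W) < l})\<rfloor>)"

definition sejr_continue :: "'v set \<Rightarrow> 'c set \<Rightarrow> ('v \<Rightarrow> 'c set) \<Rightarrow> nat \<Rightarrow> 'c set \<Rightarrow> bool" where
  "sejr_continue N C A k W \<longleftrightarrow> card W < k \<and> (\<exists>c\<in>C - W. dis_level N A k W c > 0)"

definition sejr_step :: "'v set \<Rightarrow> 'c set \<Rightarrow> ('v \<Rightarrow> 'c set) \<Rightarrow> nat \<Rightarrow> 'c set \<Rightarrow> 'c set \<Rightarrow> bool" where
  "sejr_step N C A k W W' \<longleftrightarrow> sejr_continue N C A k W \<and>
     (\<exists>c\<in>C - W. (\<forall>d\<in>C - W. dis_level N A k W d \<le> dis_level N A k W c) \<and> W' = insert c W)"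

text \<open>Possible outputs of a rule of the SEJR subfamily: run the loop from the empty set
  until it stops, then Alg3 adds arbitrary candidates up to size k.\<close>
definition sejr_output :: "'v set \<Rightarrow> 'c set \<Rightarrow> ('v \<Rightarrow> 'c set) \<Rightarrow> nat \<Rightarrow> 'c set \<Rightarrow> bool" where
  "sejr_output N C A k W' \<longleftrightarrow> (\<exists>W. (sejr_step N C A k)\<^sup>*\<^sup>* {} W \<and> \<not> sejr_continue N C A k W \<and>
      W \<subseteq> W' \<and> W' \<subseteq> C \<and> card W' = k)"

end

theory Submission
  imports Defs
begin

text \<open>Suppose an \<open>l\<close>-cohesive group \<open>G\<close> is left with fewer than \<open>l\<close> approved winners each.
  Then at every stage of the run some common candidate of \<open>G\<close> is still unelected and all of
  \<open>G\<close> are its unsatisfied supporters, so its dissatisfaction level is at least \<open>l\<close>; hence the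
  main loop fills the whole committee and every chosen level is at least \<open>l\<close>. A candidate
  chosen at level \<open>m\<close> has at least \<open>m n / k\<close> unsatisfied supporters; giving each of them
  weight \<open>1/m\<close> raises the total weight by at least \<open>n/k\<close>. Because the chosen levels never
  increase, a voter's weight never exceeds (her approved winners)/(current level) nor \<open>1\<close>.
  After \<open>k\<close> steps the total weight is \<open>n\<close>, so every voter has weight \<open>1\<close>, which is
  impossible for a member of \<open>G\<close>.\<close>

definition unsatisfied_supporters :: "'v set \<Rightarrow> ('v \<Rightarrow> 'c set) \<Rightarrow> 'c set \<Rightarrow> 'c \<Rightarrow> nat \<Rightarrow> 'v set"
  where "unsatisfied_supporters N A W c l = {i\<in>N. c \<in> A i \<and> card (A i \<inter> W) < l}"

definition scaled_support :: "'v set \<Rightarrow> ('v \<Rightarrow> 'c set) \<Rightarrow> nat \<Rightarrow> 'c set \<Rightarrow> 'c \<Rightarrow> nat \<Rightarrow> real"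
  where "scaled_support N A k W c l =
    real k / real (card N) * real (card (unsatisfied_supporters N A W c l))"

lemma dis_level_eq_Greatest:
  "dis_level N A k W c = (GREATEST l. int l = \<lfloor>scaled_support N A k W c l\<rfloor>)"
  by (simp add: dis_level_def scaled_support_def unsatisfied_supporters_def)

lemma nat_fixpoint_above:
  fixes f :: "nat \<Rightarrow> int"
  assumes "mono f" and "\<And>y. f y \<le> int b" and "int x \<le> f x"
  shows "\<exists>y\<ge>x. int y = f y"
  using assms(3)
proof (induction "b - x" arbitrary: x rule: less_induct)
  case less
  show ?case
  proof (cases "int x = f x")
    case False
    with less.prems have step: "int (Suc x) \<le> f x" by simp
    with assms(2)[of x] have "x < b" by simp
    have "int (Suc x) \<le> f (Suc x)"
      using step monoD[OF assms(1), of x "Suc x"] by simp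
    moreover have "b - Suc x < b - x" using \<open>x < b\<close> by simp
    ultimately obtain y where "y \<ge> Suc x" "int y = f y" using less.hyps by blast
    then show ?thesis by (auto intro: Suc_leD)
  qed blast
qed

lemma scaled_support_le:
  assumes "finite N" and "N \<noteq> {}"
  shows "scaled_support N A k W c l \<le> real k"
proof -
  have "card (unsatisfied_supporters N A W c l) \<le> card N"
    using assms(1) by (intro card_mono) (auto simp: unsatisfied_supporters_def)
  moreover have "card N > 0" using assms by auto
  ultimately show ?thesis
    unfolding scaled_support_def by (simp add: divide_simps mult_left_mono)
qed

lemma mono_scaled_support:
  assumes "finite N"
  shows "mono (scaled_support N A k W c)"
proof
  fix l l' :: nat assume "l \<le> l'"
  then have "card (unsatisfied_supporters N A W c l) \<le> card (unsatisfied_supporters N A W c l')"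
    using assms by (intro card_mono) (auto simp: unsatisfied_supporters_def)
  then show "scaled_support N A k W c l \<le> scaled_support N A k W c l'"
    unfolding scaled_support_def by (intro mult_left_mono) auto
qed

lemma scaled_support_antimono_committee:
  assumes "finite N" and "W \<subseteq> W'" and "finite W'"
  shows "scaled_support N A k W' c l \<le> scaled_support N A k W c l"
proof -
  have "card (A i \<inter> W) \<le> card (A i \<inter> W')" for i
    using assms(2,3) by (intro card_mono) auto
  then have "unsatisfied_supporters N A W' c l \<subseteq> unsatisfied_supporters N A W c l"
    unfolding unsatisfied_supporters_def using le_less_trans by blast
  then have "card (unsatisfied_supporters N A W' c l) \<le> card (unsatisfied_supporters N A W c l)"
    using assms(1) by (intro card_mono) (auto simp: unsatisfied_supporters_def)
  then show ?thesis
    unfolding scaled_support_def by (intro mult_left_mono) auto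
qed

lemma dis_level_fixpoint_le:
  assumes "finite N" and "N \<noteq> {}" and "int l = \<lfloor>scaled_support N A k W c l\<rfloor>"
  shows "l \<le> k"
  using assms(3) floor_mono[OF scaled_support_le[OF assms(1,2)], of A k W c l] by simp

lemma dis_level_is_fixpoint:
  assumes "finite N" and "N \<noteq> {}"
  shows "int (dis_level N A k W c) = \<lfloor>scaled_support N A k W c (dis_level N A k W c)\<rfloor>"
  unfolding dis_level_eq_Greatest
  by (rule GreatestI_nat[where k = 0 and b = k])
    (auto simp: scaled_support_def unsatisfied_supporters_def intro: dis_level_fixpoint_le[OF assms])

lemma dis_level_le:
  assumes "finite N" and "N \<noteq> {}"
  shows "dis_level N A k W c \<le> k"
  using dis_level_fixpoint_le[OF assms dis_level_is_fixpoint[OF assms]] .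

lemma dis_level_le_scaled_support:
  assumes "finite N" and "N \<noteq> {}"
  shows "real (dis_level N A k W c) \<le> scaled_support N A k W c (dis_level N A k W c)"
  by (metis dis_level_is_fixpoint[OF assms] of_int_floor_le of_int_of_nat_eq)

lemma le_dis_level:
  assumes "finite N" and "N \<noteq> {}" and "real l \<le> scaled_support N A k W c l"
  shows "l \<le> dis_level N A k W c"
proof -
  let ?f = "\<lambda>l. \<lfloor>scaled_support N A k W c l\<rfloor>"
  have "mono ?f"
    using monoD[OF mono_scaled_support[OF assms(1), of A k W c]] by (auto intro!: monoI floor_mono)
  moreover have "?f y \<le> int k" for y
    using floor_mono[OF scaled_support_le[OF assms(1,2)]] by simp
  moreover have "int l \<le> ?f l"
    using assms(3) by (simp add: le_floor_iff)
  ultimately obtain y where "y \<ge> l" "int y = ?f y"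
    using nat_fixpoint_above by blast
  moreover have "y \<le> dis_level N A k W c"
    unfolding dis_level_eq_Greatest
    by (rule Greatest_le_nat[where b = k]) (use \<open>int y = ?f y\<close> dis_level_fixpoint_le[OF assms(1,2)] in auto)
  ultimately show ?thesis by simp
qed

lemma dis_level_antimono_committee:
  assumes "finite N" and "N \<noteq> {}" and "W \<subseteq> W'" and "finite W'"
  shows "dis_level N A k W' c \<le> dis_level N A k W c"
proof -
  let ?l = "dis_level N A k W' c"
  have "real ?l \<le> scaled_support N A k W' c ?l"
    by (rule dis_level_le_scaled_support[OF assms(1,2)])
  also have "\<dots> \<le> scaled_support N A k W c ?l"
    by (rule scaled_support_antimono_committee[OF assms(1,3,4)])
  finally show ?thesis by (rule le_dis_level[OF assms(1,2)])
qed

lemma cohesive_nonempty: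
  assumes "finite N" and "N \<noteq> {}" and "0 < k" and "1 \<le> l" and "cohesive N A k l G"
  shows "G \<noteq> {}"
proof -
  have "real (card N) > 0" using assms(1,2) by (simp add: card_gt_0_iff)
  with assms(3,4) have "real l * real (card N) / real k > 0" by simp
  with assms(5) show ?thesis by (auto simp: cohesive_def)
qed

lemma cohesive_unsatisfied_candidate:
  assumes "finite N" and "N \<noteq> {}" and "\<forall>i\<in>N. A i \<subseteq> C" and "finite C" and "0 < k" and "1 \<le> l"
    and "cohesive N A k l G" and unsat: "\<forall>i\<in>G. card (A i \<inter> W) < l"
    and "X \<subseteq> W" and "finite W"
  shows "\<exists>c\<in>C - X. l \<le> dis_level N A k X c"
proof -
  from assms(7) have GN: "G \<subseteq> N" and large: "real l * real (card N) / real k \<le> real (card G)"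
    and common: "l \<le> card (\<Inter>i\<in>G. A i)" unfolding cohesive_def by auto
  have n_pos: "real (card N) > 0" using assms(1,2) by (simp add: card_gt_0_iff)
  obtain i0 where i0: "i0 \<in> G" using cohesive_nonempty[OF assms(1,2,5,6,7)] by blast
  have less_W: "card (A i \<inter> X) < l" if "i \<in> G" for i
    using unsat that card_mono[of "A i \<inter> W" "A i \<inter> X"] assms(9,10) by fastforce
  have "\<not> (\<Inter>i\<in>G. A i) \<subseteq> X"
  proof
    assume "(\<Inter>i\<in>G. A i) \<subseteq> X"
    then have "(\<Inter>i\<in>G. A i) \<subseteq> A i0 \<inter> X" using i0 by auto
    moreover have "finite (A i0 \<inter> X)"
      using assms(3,4) i0 GN finite_subset by blast
    ultimately have "card (\<Inter>i\<in>G. A i) \<le> card (A i0 \<inter> X)" by (rule card_mono[rotated])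
    with common less_W[OF i0] show False by simp
  qed
  then obtain c where c: "c \<in> (\<Inter>i\<in>G. A i)" "c \<notin> X" by blast
  have "c \<in> C" using c i0 GN assms(3) by blast
  have "G \<subseteq> unsatisfied_supporters N A X c l"
    using GN c less_W by (auto simp: unsatisfied_supporters_def)
  then have "card G \<le> card (unsatisfied_supporters N A X c l)"
    using assms(1) by (intro card_mono) (auto simp: unsatisfied_supporters_def)
  with large have "real l * real (card N) / real k \<le> real (card (unsatisfied_supporters N A X c l))"
    by linarith
  then have "real l \<le> scaled_support N A k X c l"
    using n_pos assms(5) by (simp add: scaled_support_def field_simps)
  then have "l \<le> dis_level N A k X c" by (rule le_dis_level[OF assms(1,2)])
  with \<open>c \<in> C\<close> c(2) show ?thesis by blast
qed

text \<open>The weights \<open>w\<close> of the proof idea; \<open>L\<close> is the level of the most recently chosen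
  candidate (\<open>k\<close> before the first step).\<close>

definition weight_certificate :: "'v set \<Rightarrow> ('v \<Rightarrow> 'c set) \<Rightarrow> nat \<Rightarrow> 'c set \<Rightarrow> nat \<Rightarrow> ('v \<Rightarrow> real) \<Rightarrow> bool"
  where "weight_certificate N A k X L w \<longleftrightarrow>
    real (card X) * real (card N) / real k \<le> sum w N \<and>
    (\<forall>i\<in>N. w i \<le> 1 \<and> w i \<le> real (card (A i \<inter> X)) / real L)"

lemma weight_certificate_empty: "weight_certificate N A k {} L (\<lambda>_. 0)"
  by (simp add: weight_certificate_def)

lemma weight_certificate_insert:
  assumes cert: "weight_certificate N A k X L w"
    and "finite N" and "finite X" and "c \<notin> X" and "0 < k" and "N \<noteq> {}"
    and "0 < m" and "m \<le> L" and support: "real m \<le> scaled_support N A k X c m"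
  shows "\<exists>w'. weight_certificate N A k (insert c X) m w'"
proof -
  define S where "S = unsatisfied_supporters N A X c m"
  define w' where "w' = (\<lambda>i. w i + (if i \<in> S then 1 / real m else 0))"
  have n_pos: "real (card N) > 0" using assms(2,6) by (simp add: card_gt_0_iff)
  have "S \<subseteq> N" by (auto simp: S_def unsatisfied_supporters_def)
  then have "sum w' N = sum w N + real (card S) / real m"
    using assms(2) by (simp add: w'_def sum.distrib sum.If_cases Int_absorb1 Int_commute)
  moreover have "real (card N) / real k \<le> real (card S) / real m"
    using support n_pos assms(5,7) by (simp add: scaled_support_def S_def field_simps)
  moreover have "real (card (insert c X)) * real (card N) / real k
      = real (card X) * real (card N) / real k + real (card N) / real k"
    using assms(3,4) by (simp add: add_divide_distrib distrib_right)
  ultimately have total: "real (card (insert c X)) * real (card N) / real k \<le> sum w' N"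
    using cert by (simp add: weight_certificate_def)
  have "w' i \<le> 1 \<and> w' i \<le> real (card (A i \<inter> insert c X)) / real m" if "i \<in> N" for i
  proof -
    have "w i \<le> real (card (A i \<inter> X)) / real L"
      using cert that by (simp add: weight_certificate_def)
    also have "\<dots> \<le> real (card (A i \<inter> X)) / real m"
      using assms(7,8) by (intro divide_left_mono) auto
    finally have w_le: "w i \<le> real (card (A i \<inter> X)) / real m" .
    show ?thesis
    proof (cases "i \<in> S")
      case True
      then have "c \<in> A i" and "card (A i \<inter> X) < m" by (auto simp: S_def unsatisfied_supporters_def)
      moreover have "A i \<inter> insert c X = insert c (A i \<inter> X)" using \<open>c \<in> A i\<close> by auto
      ultimately have "card (A i \<inter> insert c X) = card (A i \<inter> X) + 1"
        and "card (A i \<inter> X) + 1 \<le> m" using assms(3,4) by auto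
      moreover have "w' i \<le> real (card (A i \<inter> X) + 1) / real m"
        using True w_le by (simp add: w'_def add_divide_distrib)
      moreover have "real (card (A i \<inter> X) + 1) / real m \<le> 1"
        using \<open>card (A i \<inter> X) + 1 \<le> m\<close> assms(7) by simp
      ultimately show ?thesis by (metis order_trans)
    next
      case False
      have "card (A i \<inter> X) \<le> card (A i \<inter> insert c X)"
        using assms(3) by (intro card_mono) auto
      then have "real (card (A i \<inter> X)) / real m \<le> real (card (A i \<inter> insert c X)) / real m"
        by (intro divide_right_mono) auto
      with False w_le cert that show ?thesis by (auto simp: w'_def weight_certificate_def)
    qed
  qed
  with total show ?thesis unfolding weight_certificate_def by blast
qed

lemma weight_certificate_full_committee:
  assumes "weight_certificate N A k W L w" and "card W = k" and "0 < k" and "finite N" and "i \<in> N"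
  shows "L \<le> card (A i \<inter> W)"
proof (rule ccontr)
  assume "\<not> L \<le> card (A i \<inter> W)"
  then have "real (card (A i \<inter> W)) / real L < 1" by simp
  then have "w i < 1" using assms(1,5) unfolding weight_certificate_def by fastforce
  moreover have "\<forall>j\<in>N. w j \<le> 1" using assms(1) by (simp add: weight_certificate_def)
  ultimately have "sum w N < sum (\<lambda>_. 1) N"
    using assms(5) by (intro sum_strict_mono_ex1[OF assms(4)]) auto
  with assms(1-3) show False by (simp add: weight_certificate_def)
qed

lemma sejr_run_weight_certificate:
  assumes run: "(sejr_step N C A k)\<^sup>*\<^sup>* {} X"
    and "finite N" and "N \<noteq> {}" and "0 < k" and "1 \<le> l" and "l \<le> k" and "finite W"
    and high_level: "\<And>Y. Y \<subseteq> W \<Longrightarrow> \<exists>c\<in>C - Y. l \<le> dis_level N A k Y c"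
  shows "X \<subseteq> W \<Longrightarrow> \<exists>w L. l \<le> L \<and> (\<forall>c\<in>C - X. dis_level N A k X c \<le> L) \<and>
           weight_certificate N A k X L w"
  using run
proof (induction rule: rtranclp_induct)
  case base
  show ?case
    using assms(6)
    by (intro exI[of _ "\<lambda>_. 0"] exI[of _ k])
      (simp add: dis_level_le[OF assms(2,3)] weight_certificate_empty)
next
  case (step X X')
  from step.hyps(2) obtain c where c: "c \<in> C - X"
    and c_max: "\<forall>d\<in>C - X. dis_level N A k X d \<le> dis_level N A k X c"
    and X': "X' = insert c X" unfolding sejr_step_def by blast
  from step.prems X' have "X \<subseteq> W" by simp
  with assms(7) have "finite X" by (rule finite_subset[rotated])
  from step.IH \<open>X \<subseteq> W\<close> obtain w L where "l \<le> L"
    and L_max: "\<forall>d\<in>C - X. dis_level N A k X d \<le> L"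
    and cert: "weight_certificate N A k X L w" by blast
  define m where "m = dis_level N A k X c"
  have "l \<le> m"
    using high_level[OF \<open>X \<subseteq> W\<close>] c_max unfolding m_def by (blast intro: le_trans)
  have "m \<le> L" using L_max c unfolding m_def by blast
  have "dis_level N A k X' d \<le> m" if "d \<in> C - X'" for d
  proof -
    have "dis_level N A k X' d \<le> dis_level N A k X d"
      using X' \<open>finite X\<close> by (intro dis_level_antimono_committee[OF assms(2,3)]) auto
    also have "\<dots> \<le> m" using c_max that X' unfolding m_def by blast
    finally show ?thesis .
  qed
  moreover obtain w' where "weight_certificate N A k X' m w'"
  proof -
    have "0 < m" using \<open>l \<le> m\<close> assms(5) by simp
    moreover have "real m \<le> scaled_support N A k X c m"
      unfolding m_def by (rule dis_level_le_scaled_support[OF assms(2,3)])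
    ultimately show ?thesis
      using weight_certificate_insert[OF cert assms(2) \<open>finite X\<close> _ assms(4,3) _ \<open>m \<le> L\<close>] c X' that
      by blast
  qed
  ultimately show ?case using \<open>l \<le> m\<close> by blast
qed

lemma sejr_output_cohesive_represented:
  assumes "finite N" and "N \<noteq> {}" and "finite C" and "\<forall>i\<in>N. A i \<subseteq> C" and "0 < k"
    and "sejr_output N C A k W" and "l \<in> {1..k}" and "cohesive N A k l G"
  shows "\<exists>i\<in>G. l \<le> card (A i \<inter> W)"
proof (rule ccontr)
  assume "\<not> ?thesis"
  then have unsat: "\<forall>i\<in>G. card (A i \<inter> W) < l" by auto
  from assms(6) obtain W0 where run: "(sejr_step N C A k)\<^sup>*\<^sup>* {} W0"
    and stop: "\<not> sejr_continue N C A k W0" and "W0 \<subseteq> W" "W \<subseteq> C" "card W = k"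
    unfolding sejr_output_def by blast
  have "finite W" using \<open>W \<subseteq> C\<close> assms(3) finite_subset by blast
  have high_level: "\<exists>c\<in>C - Y. l \<le> dis_level N A k Y c" if "Y \<subseteq> W" for Y
    using cohesive_unsatisfied_candidate[OF assms(1,2,4,3,5) _ assms(8) unsat that \<open>finite W\<close>] assms(7)
    by simp
  have "\<not> card W0 < k"
    using high_level[OF \<open>W0 \<subseteq> W\<close>] stop assms(7) unfolding sejr_continue_def by force
  then have "W0 = W"
    using \<open>W0 \<subseteq> W\<close> \<open>finite W\<close> \<open>card W = k\<close> by (intro card_seteq) auto
  then obtain w L where "l \<le> L" and cert: "weight_certificate N A k W L w"
    using sejr_run_weight_certificate[OF run assms(1,2,5) _ _ \<open>finite W\<close> high_level] assms(7) by auto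
  have "G \<subseteq> N" using assms(8) by (simp add: cohesive_def)
  moreover have "G \<noteq> {}" using cohesive_nonempty[OF assms(1,2,5) _ assms(8)] assms(7) by simp
  ultimately obtain i where "i \<in> G" "i \<in> N" by blast
  with weight_certificate_full_committee[OF cert \<open>card W = k\<close> assms(5,1)] \<open>l \<le> L\<close> unsat
  show False by fastforce
qed

theorem mainTheorem10:
  fixes N :: "'v set" and C :: "'c set" and A :: "'v \<Rightarrow> 'c set" and k :: nat and W :: "'c set"
  assumes "finite N" and "N \<noteq> {}" and "finite C"
    and "\<forall>i\<in>N. A i \<subseteq> C"
    and "0 < k" and "k \<le> card C"
    and "sejr_output N C A k W"
  shows "provides_EJR N A k W"
  using assms(7) sejr_output_cohesive_represented[OF assms(1-5,7)]
  unfolding provides_EJR_def sejr_output_def by blast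

end
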